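(* Let $\Gamma$ be a finite group, $S\subseteq\Gamma$, $g\ge 2$, and $\Sigma$ an $|S|$-list of $\Gamma$. If there is an $RSM_\Gamma(S,g;\Sigma)$, then there is an $RSM_\Gamma(S,g+i;\Sigma)$ in each of the following cases: (1) $S=-S$ and $i\ge 2$ is even; (2) $S=\Gamma$, $\Gamma$ has a complete mapping, and $i\ge 1$.
   Context: Let $\Gamma$ be a group (written additively, not necessarily abelian), $S\subseteq\Gamma$ and $\Sigma$ an $|S|$-list (multiset of $|S|$ elements) of $\Gamma$. A row-sum matrix $RSM_\Gamma(S,g;\Sigma)$ is an $|S|\times g$ matrix ($g\ge2$) with entries in $\Gamma$ such that each column is a permutation (arrangement) of $S$ and the multiset of left-to-right row sums $r_1+\cdots+r_g$ equals $\Sigma$. $-S=\{-s: s\in S\}$. A complete mapping of $\Gamma$ is a permutation $\pi$ of $\Gamma$ such that $x\mapsto x+\pi(x)$ is also a permutation of $\Gamma$. *)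

theory Defs
  imports Main "HOL-Library.Multiset"
begin

definition row_sum :: "(nat \<Rightarrow> nat \<Rightarrow> 'a::group_add) \<Rightarrow> nat \<Rightarrow> nat \<Rightarrow> 'a" where
  "row_sum M g r = sum_list (map (\<lambda>j. M r j) [0..<g])"

definition is_RSM :: "'a::group_add set \<Rightarrow> nat \<Rightarrow> 'a multiset \<Rightarrow> (nat \<Rightarrow> nat \<Rightarrow> 'a) \<Rightarrow> bool" where
  "is_RSM S g \<Sigma> M \<longleftrightarrow> g \<ge> 2 \<and>
     (\<forall>j<g. bij_betw (\<lambda>r. M r j) {0..<card S} S) \<and>
     mset (map (row_sum M g) [0..<card S]) = \<Sigma>"

definition complete_mapping :: "('a::group_add \<Rightarrow> 'a) \<Rightarrow> bool" where
  "complete_mapping \<pi> \<longleftrightarrow> bij \<pi> \<and> bij (\<lambda>x. x + \<pi> x)"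

end

theory Submission
  imports Defs
begin

text \<open>Appending to an RSM a column x together with the column -x leaves every row sum unchanged,
  and -x is again an arrangement of S when S = -S; this gives every even i. When S is the whole
  group and \<pi> is a complete mapping, \<phi> x = x + \<pi> x is a permutation, so the last column c can be
  replaced by the two columns \<phi>\<inverse>(c) and \<pi>(\<phi>\<inverse>(c)): both are arrangements of the group and their
  sum is c. One such split followed by the even case gives every odd i.\<close>

lemma row_sum_Suc: "row_sum M (Suc g) r = row_sum M g r + M r g"
  by (simp add: row_sum_def)

lemma is_RSM_same_row_sums:
  assumes "is_RSM S g \<Sigma> M" and "g' \<ge> 2"
    and "\<And>j. j < g' \<Longrightarrow> bij_betw (\<lambda>r. N r j) {0..<card S} S"
    and "\<And>r. r < card S \<Longrightarrow> row_sum N g' r = row_sum M g r"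
  shows "is_RSM S g' \<Sigma> N"
proof -
  have "map (row_sum N g') [0..<card S] = map (row_sum M g) [0..<card S]"
    using assms(4) by simp
  with assms show ?thesis unfolding is_RSM_def by (simp only:) auto
qed

lemma bij_betw_comp_permutation:
  assumes "bij_betw c A S" and "bij_betw f S S"
  shows "bij_betw (\<lambda>r. f (c r)) A S"
  using bij_betw_trans[OF assms] by (simp add: comp_def)

lemma is_RSM_add_zero_sum_pair:
  fixes S :: "'a::group_add set"
  assumes M: "is_RSM S g \<Sigma> M" and neg: "uminus ` S = S"
  shows "is_RSM S (g + 2) \<Sigma> (\<lambda>r j. if j < g then M r j else if j = g then M r 0 else - M r 0)"
    (is "is_RSM S _ _ ?N")
proof (rule is_RSM_same_row_sums[OF M])
  have g: "g \<ge> 2" and cols: "\<And>j. j < g \<Longrightarrow> bij_betw (\<lambda>r. M r j) {0..<card S} S"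
    using M by (auto simp: is_RSM_def)
  have "bij_betw uminus S S"
    using neg by (auto intro: bij_betw_imageI inj_onI)
  then have "bij_betw (\<lambda>r. - M r 0) {0..<card S} S"
    using bij_betw_comp_permutation[OF cols[of 0]] g by simp
  then show "bij_betw (\<lambda>r. ?N r j) {0..<card S} S" if "j < g + 2" for j
    using that cols[of j] cols[of 0] g
    by (cases "j < g"; cases "j = g") auto
  show "row_sum ?N (g + 2) r = row_sum M g r" for r
  proof -
    have "row_sum ?N g r = row_sum M g r"
      unfolding row_sum_def by (intro arg_cong[of _ _ sum_list] map_cong) auto
    then show ?thesis
      by (simp add: add_2_eq_Suc' row_sum_Suc)
  qed
qed simp

lemma is_RSM_add_even:
  fixes S :: "'a::group_add set"
  assumes "is_RSM S g \<Sigma> M" and "uminus ` S = S"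
  shows "\<exists>N. is_RSM S (g + 2 * k) \<Sigma> N"
proof (induction k)
  case 0
  then show ?case using assms(1) by auto
next
  case (Suc k)
  then obtain N where "is_RSM S (g + 2 * k) \<Sigma> N" by blast
  from is_RSM_add_zero_sum_pair[OF this assms(2)] show ?case
    by (auto simp: add.assoc)
qed

lemma complete_mapping_split:
  assumes "complete_mapping \<pi>"
  defines "\<phi> \<equiv> \<lambda>x. x + \<pi> x"
  shows "inv \<phi> c + \<pi> (inv \<phi> c) = c"
  using assms surj_f_inv_f[of \<phi> c] by (simp add: complete_mapping_def bij_is_surj)

lemma is_RSM_split_last_column:
  fixes M :: "nat \<Rightarrow> nat \<Rightarrow> 'a::group_add" and \<pi> :: "'a \<Rightarrow> 'a"
  assumes M: "is_RSM UNIV (Suc g) \<Sigma> M" and \<pi>: "complete_mapping \<pi>"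
  shows "\<exists>N. is_RSM UNIV (Suc (Suc g)) \<Sigma> N"
proof -
  define \<phi> :: "'a \<Rightarrow> 'a" where "\<phi> = (\<lambda>x. x + \<pi> x)"
  define N where "N = (\<lambda>r j. if j < g then M r j
      else if j = g then inv \<phi> (M r g) else \<pi> (inv \<phi> (M r g)))"
  let ?R = "{0..<card (UNIV :: 'a set)}"
  have cols: "\<And>j. j < Suc g \<Longrightarrow> bij_betw (\<lambda>r. M r j) ?R UNIV"
    using M by (auto simp: is_RSM_def)
  have "bij \<pi>" "bij (inv \<phi>)"
    using \<pi> by (auto simp: complete_mapping_def \<phi>_def bij_imp_bij_inv)
  then have split_cols: "bij_betw (\<lambda>r. inv \<phi> (M r g)) ?R UNIV"
      "bij_betw (\<lambda>r. \<pi> (inv \<phi> (M r g))) ?R UNIV"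
    using bij_betw_comp_permutation[OF cols[of g]]
      bij_betw_comp_permutation[of "\<lambda>r. inv \<phi> (M r g)" _ _ \<pi>]
    by simp_all
  have "is_RSM UNIV (Suc (Suc g)) \<Sigma> N"
  proof (rule is_RSM_same_row_sums[OF M])
    show "bij_betw (\<lambda>r. N r j) ?R UNIV" if "j < Suc (Suc g)" for j
      using that cols[of j] split_cols by (cases "j < g"; cases "j = g") (auto simp: N_def)
    show "row_sum N (Suc (Suc g)) r = row_sum M (Suc g) r" for r
    proof -
      have "row_sum N g r = row_sum M g r"
        unfolding row_sum_def N_def by (intro arg_cong[of _ _ sum_list] map_cong) auto
      then show ?thesis
        using complete_mapping_split[OF \<pi>, of "M r g"]
        by (simp add: row_sum_Suc N_def \<phi>_def add.assoc)
    qed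
  qed simp
  then show ?thesis by blast
qed

theorem mainTheorem5:
  fixes S :: "'a::{group_add, finite} set"
    and \<Sigma> :: "'a multiset"
    and g i :: nat
  assumes "g \<ge> 2"
    and "size \<Sigma> = card S"
    and "\<exists>M. is_RSM S g \<Sigma> M"
  shows "(uminus ` S = S \<and> i \<ge> 2 \<and> even i \<longrightarrow> (\<exists>M. is_RSM S (g + i) \<Sigma> M))
       \<and> (S = UNIV \<and> (\<exists>\<pi>::'a \<Rightarrow> 'a. complete_mapping \<pi>) \<and> i \<ge> 1
            \<longrightarrow> (\<exists>M. is_RSM S (g + i) \<Sigma> M))"
proof (intro conjI impI)
  obtain M where M: "is_RSM S g \<Sigma> M" using assms(3) by blast
  have even_case: "\<exists>N. is_RSM S (g + i) \<Sigma> N" if "uminus ` S = S" "even i"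
  proof -
    have "g + i = g + 2 * (i div 2)" using \<open>even i\<close> by simp
    then show ?thesis using is_RSM_add_even[OF M that(1)] by presburger
  qed
  then show "\<exists>N. is_RSM S (g + i) \<Sigma> N" if "uminus ` S = S \<and> i \<ge> 2 \<and> even i"
    using that by blast
  assume "S = UNIV \<and> (\<exists>\<pi>::'a \<Rightarrow> 'a. complete_mapping \<pi>) \<and> i \<ge> 1"
  then obtain \<pi> :: "'a \<Rightarrow> 'a" where S: "S = UNIV" and \<pi>: "complete_mapping \<pi>" by blast
  have sym: "uminus ` S = S"
    unfolding S by (rule surjI[of _ uminus]) simp
  show "\<exists>N. is_RSM S (g + i) \<Sigma> N"
  proof (cases "even i")
    case False
    obtain k where "g = Suc k" using assms(1) by (cases g) auto
    then obtain N where N: "is_RSM S (Suc g) \<Sigma> N"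
      using is_RSM_split_last_column[of k \<Sigma> M \<pi>] M \<pi> S by blast
    have "g + i = Suc g + 2 * (i div 2)" using False by presburger
    then show ?thesis using is_RSM_add_even[OF N sym] by presburger
  qed (use even_case sym in blast)
qed

end
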